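(* Let $X$ be a real Banach space, $Y$ a (closed linear) subspace of $X$, $N\in\mathbb{N}$, and $f:[0,\infty)^N\to[0,\infty)$ a convex monotone function. Then the map $\mathrm{rad}_Y^f:(\mathcal{F}_N(X),d)\to[0,\infty)$ is Lipschitz continuous on bounded subsets of $\mathcal{F}_N(X)$.
   Context: $\mathcal{F}_N(X)$ is the set of subsets of $X$ of cardinality $N$, each written (with a fixed enumeration) as $\{x_1,\dots,x_N\}$, with the metric $d(F_1,F_2)=\max_{1\le i\le N}\|x_i-x_i'\|$ for $F_1=\{x_1,\dots,x_N\}$, $F_2=\{x_1',\dots,x_N'\}$. $f$ is monotone if $a\le b$ coordinatewise implies $f(a)\le f(b)$. For $F=\{x_1,\dots,x_N\}$, $r_f(y,F)=f(\|y-x_1\|,\dots,\|y-x_N\|)$ and $\mathrm{rad}_Y^f(F)=\inf_{y\in Y}r_f(y,F)$. *)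

theory Defs
  imports "HOL-Analysis.Analysis"
begin

text \<open>An element of F_N(X) is an N-element subset of X together with its fixed
enumeration; we represent it as an injective map from the finite index type 'n
(with CARD('n) = N) into X.\<close>

definition FN :: "('n::finite \<Rightarrow> 'a) set" where
  "FN = {F. inj F}"

definition fdist :: "('n::finite \<Rightarrow> 'a::real_normed_vector) \<Rightarrow> ('n \<Rightarrow> 'a) \<Rightarrow> real" where
  "fdist F1 F2 = Max (range (\<lambda>i. norm (F1 i - F2 i)))"

definition nonneg_orthant :: "(real^'n::finite) set" where
  "nonneg_orthant = {a. \<forall>i. 0 \<le> a $ i}"

definition monotone_orthant :: "(real^'n::finite \<Rightarrow> real) \<Rightarrow> bool" where
  "monotone_orthant f \<longleftrightarrow>
     (\<forall>a\<in>nonneg_orthant. \<forall>b\<in>nonneg_orthant. (\<forall>i. a $ i \<le> b $ i) \<longrightarrow> f a \<le> f b)"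

definition r_f :: "(real^'n::finite \<Rightarrow> real) \<Rightarrow> 'a::real_normed_vector \<Rightarrow> ('n \<Rightarrow> 'a) \<Rightarrow> real" where
  "r_f f y F = f (\<chi> i. norm (y - F i))"

definition rad :: "'a::real_normed_vector set \<Rightarrow> (real^'n::finite \<Rightarrow> real) \<Rightarrow> ('n \<Rightarrow> 'a) \<Rightarrow> real" where
  "rad Y f F = (INF y\<in>Y. r_f f y F)"

end

theory Submission
  imports Defs
begin

text \<open>Let \<open>d = d(F\<^sub>1, F\<^sub>2)\<close>, \<open>t = d / (1 + d)\<close> and let every point of \<open>F\<^sub>2\<close> have norm at
most \<open>R\<close>. For \<open>y \<in> Y\<close> the shrunk point \<open>(1 - t) y \<in> Y\<close> satisfies, coordinatewise,
\<open>\<parallel>(1 - t) y - x\<^sub>i'\<parallel> \<le> (1 - t) \<parallel>y - x\<^sub>i\<parallel> + t (R + 1)\<close>, so monotonicity and convexity of \<open>f\<close> give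
\<open>r\<^sub>f((1 - t) y, F\<^sub>2) \<le> r\<^sub>f(y, F\<^sub>1) + d f(R + 1, \<dots>, R + 1)\<close>. Taking infima over \<open>y\<close> and
symmetrising yields the Lipschitz constant \<open>f(R + 1, \<dots>, R + 1)\<close> on any bounded set.
Shrinking towards \<open>0\<close> avoids any bound on \<open>y\<close>.\<close>

lemma norm_le_fdist: "norm (F1 i - F2 i) \<le> fdist F1 F2"
  unfolding fdist_def by (rule Max_ge) auto

lemma fdist_nonneg: "0 \<le> fdist F1 F2"
  using norm_ge_zero norm_le_fdist by (rule order_trans)

lemma fdist_commute: "fdist F1 F2 = fdist F2 F1"
  unfolding fdist_def by (simp add: norm_minus_commute)

lemma fdist_bounded_imp_norm_bounded:
  fixes B :: "('n::finite \<Rightarrow> 'a::real_normed_vector) set"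
  assumes "\<forall>F1\<in>B. \<forall>F2\<in>B. fdist F1 F2 \<le> C"
  shows "\<exists>R. \<forall>F\<in>B. \<forall>i. norm (F i) \<le> R"
proof (cases "B = {}")
  case False
  then obtain F0 where F0: "F0 \<in> B" by auto
  define M where "M = Max (range (\<lambda>i. norm (F0 i)))"
  have "norm (F i) \<le> C + M" if "F \<in> B" for F i
  proof -
    have "norm (F i) \<le> norm (F i - F0 i) + norm (F0 i)"
      using norm_triangle_ineq[of "F i - F0 i" "F0 i"] by simp
    moreover have "norm (F i - F0 i) \<le> C"
      using assms that F0 norm_le_fdist order_trans by blast
    moreover have "norm (F0 i) \<le> M"
      unfolding M_def by (rule Max_ge) auto
    ultimately show ?thesis by linarith
  qed
  then show ?thesis by blast
qed simp

lemma norm_shrink_sub_le: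
  fixes y p q :: "'a::real_normed_vector"
  assumes t: "0 \<le> t" "t \<le> 1" "(1 - t) * d = t"
    and "norm p \<le> R" and "norm (q - p) \<le> d"
  shows "norm ((1 - t) *\<^sub>R y - p) \<le> (1 - t) * norm (y - q) + t * (R + 1)"
proof -
  have "(1 - t) *\<^sub>R y - p = (1 - t) *\<^sub>R (y - p) - t *\<^sub>R p"
    by (simp add: algebra_simps)
  then have "norm ((1 - t) *\<^sub>R y - p) \<le> (1 - t) * norm (y - p) + t * norm p"
    using t norm_triangle_ineq4[of "(1 - t) *\<^sub>R (y - p)" "t *\<^sub>R p"] by simp
  also have "\<dots> \<le> (1 - t) * (norm (y - q) + d) + t * R"
  proof (intro add_mono mult_left_mono)
    show "norm (y - p) \<le> norm (y - q) + d"
      using assms norm_triangle_ineq[of "y - q" "q - p"] by simp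
  qed (use assms in auto)
  also have "\<dots> = (1 - t) * norm (y - q) + t * (R + 1)"
    using t(3) by (simp add: algebra_simps)
  finally show ?thesis .
qed

lemma r_f_shrink_le:
  fixes f :: "real^'n::finite \<Rightarrow> real" and F1 F2 :: "'n \<Rightarrow> 'a::real_normed_vector"
  assumes cvx: "convex_on nonneg_orthant f" and mono: "monotone_orthant f"
    and t: "0 \<le> t" "t \<le> 1" "(1 - t) * d = t"
    and R: "\<forall>i. norm (F2 i) \<le> R" and d: "\<forall>i. norm (F1 i - F2 i) \<le> d"
  shows "r_f f ((1 - t) *\<^sub>R y) F2 \<le> (1 - t) * r_f f y F1 + t * f (\<chi> i. R + 1)"
proof -
  define a :: "real^'n" where "a = (\<chi> i. norm (y - F1 i))"
  define w :: "real^'n" where "w = (\<chi> i. R + 1)"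
  have "0 \<le> R" using R norm_ge_zero order_trans by blast
  then have a: "a \<in> nonneg_orthant" and w: "w \<in> nonneg_orthant"
    unfolding a_def w_def nonneg_orthant_def by auto
  have "(1 - t) *\<^sub>R a + t *\<^sub>R w \<in> nonneg_orthant"
    using a w t unfolding nonneg_orthant_def by auto
  moreover have "norm ((1 - t) *\<^sub>R y - F2 i) \<le> ((1 - t) *\<^sub>R a + t *\<^sub>R w) $ i" for i
    using norm_shrink_sub_le[OF t R[rule_format, of i] d[rule_format, of i]]
    unfolding a_def w_def by simp
  ultimately have "r_f f ((1 - t) *\<^sub>R y) F2 \<le> f ((1 - t) *\<^sub>R a + t *\<^sub>R w)"
    using mono unfolding monotone_orthant_def r_f_def nonneg_orthant_def by auto
  also have "\<dots> \<le> (1 - t) * f a + t * f w"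
    using convex_onD[OF cvx] t a w by blast
  finally show ?thesis unfolding r_f_def a_def w_def .
qed

lemma rad_le_rad_add_fdist:
  fixes Y :: "'a::real_normed_vector set" and f :: "real^'n::finite \<Rightarrow> real"
  assumes Y: "subspace Y"
    and cvx: "convex_on nonneg_orthant f" and mono: "monotone_orthant f"
    and nonneg: "\<forall>a\<in>nonneg_orthant. 0 \<le> f a"
    and R: "\<forall>i. norm (F2 i) \<le> R"
  shows "rad Y f F2 \<le> rad Y f F1 + f (\<chi> i. R + 1) * fdist F1 F2"
proof -
  define d where "d = fdist F1 F2"
  define t where "t = d / (1 + d)"
  define L where "L = f (\<chi> i. R + 1)"
  have "0 \<le> d" unfolding d_def by (rule fdist_nonneg)
  then have t: "0 \<le> t" "t \<le> 1" "(1 - t) * d = t" "t \<le> d"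
    unfolding t_def by (auto simp: field_simps)
  have "0 \<le> R" using R norm_ge_zero order_trans by blast
  then have "0 \<le> L"
    unfolding L_def using nonneg by (simp add: nonneg_orthant_def)
  have r_f_nonneg: "0 \<le> r_f f y F" for y and F :: "'n \<Rightarrow> 'a"
    unfolding r_f_def using nonneg by (simp add: nonneg_orthant_def)
  have "rad Y f F2 - L * d \<le> r_f f y F1" if "y \<in> Y" for y
  proof -
    have "rad Y f F2 \<le> r_f f ((1 - t) *\<^sub>R y) F2"
      unfolding rad_def using Y that r_f_nonneg
      by (intro cINF_lower bdd_belowI2) (auto simp: subspace_scale)
    also have "\<dots> \<le> (1 - t) * r_f f y F1 + t * L"
      unfolding L_def using r_f_shrink_le[OF cvx mono t(1-3) R] norm_le_fdist d_def by blast
    also have "\<dots> \<le> r_f f y F1 + L * d"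
      using mult_nonneg_nonneg[OF t(1) r_f_nonneg[of y F1]] mult_right_mono[OF t(4) \<open>0 \<le> L\<close>]
      by (simp add: algebra_simps)
    finally show ?thesis by simp
  qed
  moreover have "Y \<noteq> {}" using Y subspace_0 by auto
  ultimately have "rad Y f F2 - L * d \<le> rad Y f F1"
    unfolding rad_def[of Y f F1] by (intro cINF_greatest) auto
  then show ?thesis unfolding L_def d_def by simp
qed

theorem proposition4p3:
  fixes Y :: "'a::banach set"
    and f :: "real^'n::finite \<Rightarrow> real"
    and B :: "('n \<Rightarrow> 'a) set"
  assumes "subspace Y" and "closed Y"
    and "convex_on nonneg_orthant f"
    and "monotone_orthant f"
    and "\<forall>a\<in>nonneg_orthant. 0 \<le> f a"
    and "B \<subseteq> FN"
    and "\<exists>C. \<forall>F1\<in>B. \<forall>F2\<in>B. fdist F1 F2 \<le> C"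
  shows "\<exists>L. \<forall>F1\<in>B. \<forall>F2\<in>B. \<bar>rad Y f F1 - rad Y f F2\<bar> \<le> L * fdist F1 F2"
proof -
  obtain R where R: "\<forall>F\<in>B. \<forall>i. norm (F i) \<le> R"
    using assms(7) fdist_bounded_imp_norm_bounded by blast
  have "\<bar>rad Y f F1 - rad Y f F2\<bar> \<le> f (\<chi> i. R + 1) * fdist F1 F2"
    if "F1 \<in> B" "F2 \<in> B" for F1 F2
    using rad_le_rad_add_fdist[OF assms(1,3-5), of F2 R F1]
      rad_le_rad_add_fdist[OF assms(1,3-5), of F1 R F2] R that
    by (simp add: fdist_commute abs_le_iff)
  then show ?thesis by blast
qed

end
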